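(* Let $s,t$ be real numbers. For every integer $n \geq 3$, $$\det W_n = \Big\lfloor \frac{n-1}{2}\Big\rfloor (-s)^{n-3}t^3 - s\det W_{n-1}.$$
   Context: All matrices below are $n\times n$ upper Hessenberg with subdiagonal entries $a_{i+1,i}=s$ and $a_{ij}=0$ for $i>j+1$; only the entries $a_{ij}$ with $i\le j$ are specified. For $n = 2k+1$ ($k\ge 1$), $W_n$ has: $a_{1j}=t$ for $1\le j\le k$, $a_{1j}=0$ for $k+1\le j\le 2k$, $a_{1n}=t$; for $2\le i\le k+1$: $a_{ij}=0$ for $i\le j\le k$, $a_{ij}=t$ for $k+1\le j\le 2k$, $a_{in}=0$; for $k+2\le i\le n$: $a_{ij}=0$ for $i\le j\le 2k$, $a_{in}=t$. For $n=2k+2$ ($k\ge 0$), $W_n$ has: $a_{1j}=t$ for $1\le j\le k$, $a_{1j}=0$ for $k+1\le j\le 2k+1$, $a_{1n}=t$; for $2\le i\le k+1$: $a_{ij}=0$ for $i\le j\le k$, $a_{ij}=t$ for $k+1\le j\le 2k+1$, $a_{in}=0$; for $k+2\le i\le n$: $a_{ij}=0$ for $i\le j\le 2k+1$, $a_{in}=t$. *)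

theory Defs
  imports "Jordan_Normal_Form.Determinant"
begin

(* Entry a_{ij} of W_n, with 1-based indices i, j in {1..n}.
   For both n = 2k+1 and n = 2k+2 the parameter k equals (n-1) div 2,
   and the column ranges "k+1..2k" (odd case) / "k+1..2k+1" (even case)
   are both "k+1..n-1". *)
definition W_entry :: "nat \<Rightarrow> real \<Rightarrow> real \<Rightarrow> nat \<Rightarrow> nat \<Rightarrow> real" where
  "W_entry n s t i j =
    (let k = (n - 1) div 2 in
     if i > j + 1 then 0
     else if i = j + 1 then s
     else if i = 1 then (if j = n then t else if j \<le> k then t else 0)
     else if i \<le> k + 1 then (if j = n then 0 else if j \<le> k then 0 else t)
     else (if j = n then t else 0))"

(* W_n as an n x n matrix (Jordan_Normal_Form matrices are 0-indexed). *)
definition W :: "nat \<Rightarrow> real \<Rightarrow> real \<Rightarrow> real mat" where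
  "W n s t = mat n n (\<lambda>(i, j). W_entry n s t (i + 1) (j + 1))"

end

theory Submission
  imports Defs
begin

(* Expanding the determinant of an upper Hessenberg matrix with constant subdiagonal s along
   its first row gives  det H = sum_j (-s)^(j-1) h_1j det H_j,  where H_j is the trailing block
   below and to the right of h_1j.  Let k = floor((n-1)/2).  The first row of W_n carries t in
   the columns 1..k and n.  For column n the trailing block is empty; for a column j <= k, the
   first row of H_j carries t exactly in the n - 1 - k columns k+1..n-1, and each of these is
   followed by a block whose first row is zero except for t in its last column.  Hence
     det W_n = (-s)^(n-1) t + k (n - 1 - k) (-s)^(n-3) t^3,
   and the recurrence follows from  k (n - 1 - k) - k' (n - 2 - k') = k  for k' = floor((n-2)/2). *)

definition hessenberg :: "nat \<Rightarrow> 'a \<Rightarrow> (nat \<Rightarrow> nat \<Rightarrow> 'a) \<Rightarrow> 'a :: comm_ring_1 mat" where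
  "hessenberg n s a =
     mat n n (\<lambda>(i, j). if j + 1 < i then 0 else if i = j + 1 then s else a i j)"

lemma hessenberg_carrier [simp]: "hessenberg n s a \<in> carrier_mat n n"
  unfolding hessenberg_def by simp

lemma det_hessenberg_1: "det (hessenberg 1 s a) = a 0 0"
  by (simp add: det_single hessenberg_def)

lemma det_hessenberg_Suc_Suc:
  "det (hessenberg (Suc (Suc n)) s a) =
     a 0 0 * det (hessenberg (Suc n) s (\<lambda>i j. a (Suc i) (Suc j)))
     - s * det (hessenberg (Suc n) s (\<lambda>i j. a (if i = 0 then 0 else Suc i) (Suc j)))"
proof -
  let ?H = "hessenberg (Suc (Suc n)) s a"
  have "det ?H = (\<Sum>i<Suc (Suc n). ?H $$ (i, 0) * cofactor ?H i 0)"
    by (rule laplace_expansion_column) simp_all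
  also have "\<dots> = (\<Sum>i\<in>{0, 1}. ?H $$ (i, 0) * cofactor ?H i 0)"
    by (rule sum.mono_neutral_right) (auto simp: hessenberg_def)
  also have "\<dots> = a 0 0 * det (mat_delete ?H 0 0) - s * det (mat_delete ?H 1 0)"
    by (simp add: hessenberg_def cofactor_def)
  also have "mat_delete ?H 0 0 = hessenberg (Suc n) s (\<lambda>i j. a (Suc i) (Suc j))"
    by (rule eq_matI) (auto simp: hessenberg_def mat_delete_def)
  also have "mat_delete ?H 1 0 = hessenberg (Suc n) s (\<lambda>i j. a (if i = 0 then 0 else Suc i) (Suc j))"
    by (rule eq_matI) (auto simp: hessenberg_def mat_delete_def)
  finally show ?thesis .
qed

lemma det_hessenberg_first_row:
  assumes "0 < n"
  shows "det (hessenberg n s a) =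
    (\<Sum>j<n. (- s) ^ j * a 0 j * det (hessenberg (n - j - 1) s (\<lambda>i l. a (i + j + 1) (l + j + 1))))"
  using assms
proof (induction n arbitrary: a)
  case 0
  then show ?case by simp
next
  case (Suc n)
  show ?case
  proof (cases n)
    case 0
    then show ?thesis using det_hessenberg_1 by simp
  next
    case (Suc m)
    let ?b = "\<lambda>i j. a (if i = 0 then 0 else Suc i) (Suc j)"
    have "det (hessenberg (Suc n) s a) =
        a 0 0 * det (hessenberg n s (\<lambda>i j. a (Suc i) (Suc j))) - s * det (hessenberg n s ?b)"
      using det_hessenberg_Suc_Suc Suc by simp
    also have "det (hessenberg n s ?b) =
        (\<Sum>j<n. (- s) ^ j * a 0 (Suc j) * det (hessenberg (n - j - 1) s (\<lambda>i l. a (i + j + 2) (l + j + 2))))"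
      using Suc.IH [of ?b] Suc by (simp add: add.assoc)
    finally have "det (hessenberg (Suc n) s a) =
        a 0 0 * det (hessenberg n s (\<lambda>i j. a (Suc i) (Suc j))) +
        (\<Sum>j<n. (- s) ^ Suc j * a 0 (Suc j) *
           det (hessenberg (Suc n - Suc j - 1) s (\<lambda>i l. a (i + Suc j + 1) (l + Suc j + 1))))"
      by (simp add: sum_distrib_left sum_negf algebra_simps)
    then show ?thesis
      by (simp only: sum.lessThan_Suc_shift) simp
  qed
qed

lemma det_hessenberg_first_row_last:
  assumes "0 < n" and "\<And>j. j < n - 1 \<Longrightarrow> a 0 j = 0"
  shows "det (hessenberg n s a) = (- s) ^ (n - 1) * a 0 (n - 1)"
proof -
  have "det (hessenberg n s a) =
      (\<Sum>j<n. if j = n - 1 then (- s) ^ (n - 1) * a 0 (n - 1) else 0)"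
    unfolding det_hessenberg_first_row [OF assms(1)]
    by (rule sum.cong) (use assms(2) in auto)
  then show ?thesis using assms(1) by simp
qed

lemma W_entry_top_row:
  "0 < j \<Longrightarrow> W_entry n s t 1 j = (if j \<le> (n - 1) div 2 \<or> j = n then t else 0)"
  by (auto simp: W_entry_def Let_def)

lemma W_entry_middle_row:
  "\<lbrakk>2 \<le> i; i \<le> (n - 1) div 2 + 1; i \<le> j\<rbrakk> \<Longrightarrow>
     W_entry n s t i j = (if (n - 1) div 2 < j \<and> j \<noteq> n then t else 0)"
  by (auto simp: W_entry_def Let_def)

lemma W_entry_bottom_row:
  "\<lbrakk>(n - 1) div 2 + 1 < i; i \<le> j\<rbrakk> \<Longrightarrow> W_entry n s t i j = (if j = n then t else 0)"
  by (auto simp: W_entry_def Let_def)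

lemma W_eq_hessenberg: "W n s t = hessenberg n s (\<lambda>i j. W_entry n s t (Suc i) (Suc j))"
  by (rule eq_matI) (auto simp: W_def hessenberg_def W_entry_def Let_def)

lemma det_W_trailing_block:
  assumes j: "j < (n - 1) div 2"
  shows "det (hessenberg (n - j - 1) s (\<lambda>i l. W_entry n s t (i + j + 2) (l + j + 2))) =
    real (n div 2) * (- s) ^ (n - j - 3) * t ^ 2"
proof -
  define k where "k = (n - 1) div 2"
  have jk: "j < k" and n: "2 * k \<le> n - 1" "n - 1 \<le> 2 * k + 1"
    using j by (auto simp: k_def)
  define L where "L = {k - 1 - j .. n - 3 - j}"
  have "det (hessenberg (n - j - 1) s (\<lambda>i l. W_entry n s t (i + j + 2) (l + j + 2))) =
      (\<Sum>l<n - j - 1. (- s) ^ l * W_entry n s t (j + 2) (l + j + 2) *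
         det (hessenberg (n - j - l - 2) s (\<lambda>i m. W_entry n s t (i + l + j + 3) (m + l + j + 3))))"
    using jk n by (subst det_hessenberg_first_row) (simp_all add: algebra_simps numeral_eq_Suc)
  also have "\<dots> = (\<Sum>l<n - j - 1. if l \<in> L then (- s) ^ (n - j - 3) * t ^ 2 else 0)"
  proof (rule sum.cong [OF refl])
    fix l assume l: "l \<in> {..<n - j - 1}"
    have top: "W_entry n s t (j + 2) (l + j + 2) = (if l \<in> L then t else 0)"
      using l jk n by (subst W_entry_middle_row) (auto simp: L_def k_def [symmetric])
    show "(- s) ^ l * W_entry n s t (j + 2) (l + j + 2) *
        det (hessenberg (n - j - l - 2) s (\<lambda>i m. W_entry n s t (i + l + j + 3) (m + l + j + 3))) =
      (if l \<in> L then (- s) ^ (n - j - 3) * t ^ 2 else 0)"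
    proof (cases "l \<in> L")
      case True
      let ?q = "n - j - l - 2"
      have row: "k + 1 < l + j + 3" "l + j + 3 \<le> n"
        and q: "0 < ?q" and last: "?q - 1 + l + j + 3 = n"
        using True jk n by (auto simp: L_def)
      have "det (hessenberg ?q s (\<lambda>i m. W_entry n s t (i + l + j + 3) (m + l + j + 3))) =
          (- s) ^ (?q - 1) * W_entry n s t (l + j + 3) (?q - 1 + l + j + 3)"
        using row
        by (subst det_hessenberg_first_row_last [OF q]) (simp_all add: W_entry_bottom_row k_def)
      moreover have "W_entry n s t (l + j + 3) (?q - 1 + l + j + 3) = t"
        unfolding last using row W_entry_bottom_row [of n "l + j + 3" n] by (simp add: k_def)
      moreover have "n - j - 3 = l + (?q - 1)"
        using True jk n by (auto simp: L_def)
      ultimately show ?thesis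
        using True top by (simp add: power_add power2_eq_square)
    qed (simp only: top if_False mult_zero_left mult_zero_right)
  qed
  also have "\<dots> = real (card L) * ((- s) ^ (n - j - 3) * t ^ 2)"
  proof -
    have "{..<n - j - 1} \<inter> L = L" using jk n by (auto simp: L_def)
    then show ?thesis by (simp add: sum.inter_restrict [symmetric])
  qed
  also have "card L = n div 2"
    using jk unfolding L_def k_def by simp
  finally show ?thesis by simp
qed

lemma det_W_closed_form:
  assumes "0 < n"
  shows "det (W n s t) =
    (- s) ^ (n - 1) * t + real ((n - 1) div 2 * (n div 2)) * (- s) ^ (n - 3) * t ^ 3"
proof -
  define k where "k = (n - 1) div 2"
  have n: "2 * k \<le> n - 1" by (simp add: k_def)
  define c where "c = real (n div 2) * (- s) ^ (n - 3) * t ^ 3"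
  have "det (W n s t) =
      (\<Sum>j<n. (- s) ^ j * W_entry n s t 1 (j + 1) *
         det (hessenberg (n - j - 1) s (\<lambda>i l. W_entry n s t (i + j + 2) (l + j + 2))))"
    unfolding W_eq_hessenberg using assms
    by (subst det_hessenberg_first_row) (simp_all add: algebra_simps numeral_eq_Suc)
  also have "\<dots> = (\<Sum>j<n. (if j = n - 1 then (- s) ^ (n - 1) * t else 0) + (if j < k then c else 0))"
  proof (rule sum.cong [OF refl])
    fix j assume j: "j \<in> {..<n}"
    consider "j = n - 1" | "j < k" | "j \<noteq> n - 1" "\<not> j < k" by blast
    then show "(- s) ^ j * W_entry n s t 1 (j + 1) *
        det (hessenberg (n - j - 1) s (\<lambda>i l. W_entry n s t (i + j + 2) (l + j + 2))) =
      (if j = n - 1 then (- s) ^ (n - 1) * t else 0) + (if j < k then c else 0)"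
    proof cases
      case 1
      moreover have "\<not> j < k" using 1 n by auto
      moreover have "W_entry n s t 1 (j + 1) = t"
        using 1 assms W_entry_top_row [of "j + 1" n s t] by simp
      ultimately show ?thesis using assms by simp
    next
      case 2
      have "W_entry n s t 1 (j + 1) = t"
        using 2 W_entry_top_row [of "j + 1" n s t] by (simp add: k_def)
      moreover have "(- s) ^ (n - 3) = (- s) ^ j * (- s) ^ (n - j - 3)"
        using 2 n by (simp flip: power_add)
      moreover have "j \<noteq> n - 1" using 2 n by auto
      moreover note det_W_trailing_block [OF 2 [unfolded k_def], of s t]
      ultimately show ?thesis
        using 2 by (simp add: c_def power2_eq_square power3_eq_cube)
    next
      case 3
      then have "W_entry n s t 1 (j + 1) = 0"
        using j W_entry_top_row [of "j + 1" n s t] by (simp add: k_def)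
      with 3 show ?thesis by simp
    qed
  qed
  also have "\<dots> = (- s) ^ (n - 1) * t + real k * c"
  proof -
    have "{j \<in> {..<n}. j < k} = {..<k}" using n by auto
    then have "(\<Sum>j<n. if j < k then c else 0) = real k * c"
      by (simp flip: sum.inter_filter)
    then show ?thesis using assms by (simp add: sum.distrib)
  qed
  finally show ?thesis by (simp add: k_def c_def)
qed

theorem proposition5p4:
  fixes s t :: real and n :: nat
  assumes "n \<ge> 3"
  shows "det (W n s t) =
    of_int \<lfloor>(real n - 1) / 2\<rfloor> * (- s) ^ (n - 3) * t ^ 3 - s * det (W (n - 1) s t)"
proof -
  define k where "k = (n - 1) div 2"
  define c where "c = real ((n - 2) div 2 * k)"
  have floor: "\<lfloor>(real n - 1) / 2\<rfloor> = int k"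
    using assms floor_divide_of_nat_eq [of "n - 1" 2] by (simp add: k_def of_nat_diff)
  have det_n: "det (W n s t) = (- s) ^ (n - 1) * t + (real k + c) * (- s) ^ (n - 3) * t ^ 3"
  proof -
    have "n div 2 = (n - 2) div 2 + 1" using assms by presburger
    then have "k * (n div 2) = k + (n - 2) div 2 * k" by simp
    then show ?thesis using det_W_closed_form [of n s t] assms by (simp add: k_def c_def)
  qed
  have det_pred: "det (W (n - 1) s t) = (- s) ^ (n - 2) * t + c * (- s) ^ (n - 4) * t ^ 3"
    using det_W_closed_form [of "n - 1" s t] assms by (simp add: k_def c_def numeral_eq_Suc mult.commute)
  have shift: "(- s) ^ (n - 1) = - s * (- s) ^ (n - 2)"
    using assms by (simp flip: power_Suc add: Suc_diff_Suc numeral_eq_Suc)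
  have shift_c: "c * (- s) ^ (n - 3) = - s * (c * (- s) ^ (n - 4))"
    \<comment> \<open>at \<open>n = 3\<close> the exponent \<open>n - 4\<close> truncates, but then \<open>c = 0\<close>\<close>
  proof (cases "n = 3")
    case False
    then have "n - 3 = Suc (n - 4)" using assms by simp
    then show ?thesis by simp
  qed (simp add: c_def k_def)
  show ?thesis
    unfolding det_n det_pred floor using shift shift_c by (simp add: algebra_simps)
qed

end
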